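(* Let $K\ge1$, $T\ge1$ and $\ell_1,\dots,\ell_T\in[0,1]^K$. For $t\ge1$ let $c_t=1$ if $t=1$ or if there exists an expert $k$ such that $L_{t-1,k}=L^*_{t-1}$ while $L_{t,k}\ne L^*_t$, and $c_t=0$ otherwise; let $C_T=\sum_{t=1}^Tc_t$. Then the regret of Follow-the-Leader satisfies \[ \mathcal{R}^{\mathrm{ftl}}_T=\Delta^{(\infty)}_T\le C_T. \]
   Context: Hedge setting: $K$ experts; $L_{t,k}=\sum_{s=1}^t\ell_{s,k}$ ($L_{0,k}=0$), $L^*_t=\min_kL_{t,k}$. Follow-the-Leader (Hedge with learning rate $\infty$) plays in round $t$ the weights $w_t$ uniform on $\{k:L_{t-1,k}=L^*_{t-1}\}$, suffering $h_t=\sum_kw_{t,k}\ell_{t,k}$; its regret is $\mathcal{R}^{\mathrm{ftl}}_T=\sum_{t\le T}h_t-L^*_T$. Its mix loss is $m_t=L^*_t-L^*_{t-1}$, mixability gap $\delta^{(\infty)}_t=h_t-m_t$, and $\Delta^{(\infty)}_T=\sum_{t=1}^T\delta^{(\infty)}_t$. *)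

theory Defs
  imports Main "HOL.Real"
begin

text \<open>Experts are indexed by {..<K}; l t k is the loss of expert k in round t (t \<ge> 1).\<close>

definition cumloss :: "(nat \<Rightarrow> nat \<Rightarrow> real) \<Rightarrow> nat \<Rightarrow> nat \<Rightarrow> real" where
  "cumloss l t k = (\<Sum>s=1..t. l s k)"

definition Lstar :: "nat \<Rightarrow> (nat \<Rightarrow> nat \<Rightarrow> real) \<Rightarrow> nat \<Rightarrow> real" where
  "Lstar K l t = Min ((\<lambda>k. cumloss l t k) ` {..<K})"

definition leaders :: "nat \<Rightarrow> (nat \<Rightarrow> nat \<Rightarrow> real) \<Rightarrow> nat \<Rightarrow> nat set" where
  "leaders K l t = {k. k < K \<and> cumloss l t k = Lstar K l t}"

definition ftl_weight :: "nat \<Rightarrow> (nat \<Rightarrow> nat \<Rightarrow> real) \<Rightarrow> nat \<Rightarrow> nat \<Rightarrow> real" where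
  "ftl_weight K l t k = (if k \<in> leaders K l (t - 1) then 1 / real (card (leaders K l (t - 1))) else 0)"

definition ftl_loss :: "nat \<Rightarrow> (nat \<Rightarrow> nat \<Rightarrow> real) \<Rightarrow> nat \<Rightarrow> real" where
  "ftl_loss K l t = (\<Sum>k<K. ftl_weight K l t k * l t k)"

definition ftl_regret :: "nat \<Rightarrow> (nat \<Rightarrow> nat \<Rightarrow> real) \<Rightarrow> nat \<Rightarrow> real" where
  "ftl_regret K l T = (\<Sum>t=1..T. ftl_loss K l t) - Lstar K l T"

definition mix_loss_inf :: "nat \<Rightarrow> (nat \<Rightarrow> nat \<Rightarrow> real) \<Rightarrow> nat \<Rightarrow> real" where
  "mix_loss_inf K l t = Lstar K l t - Lstar K l (t - 1)"

definition mixgap_inf :: "nat \<Rightarrow> (nat \<Rightarrow> nat \<Rightarrow> real) \<Rightarrow> nat \<Rightarrow> real" where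
  "mixgap_inf K l t = ftl_loss K l t - mix_loss_inf K l t"

definition Mixgap_inf :: "nat \<Rightarrow> (nat \<Rightarrow> nat \<Rightarrow> real) \<Rightarrow> nat \<Rightarrow> real" where
  "Mixgap_inf K l T = (\<Sum>t=1..T. mixgap_inf K l t)"

definition leader_change :: "nat \<Rightarrow> (nat \<Rightarrow> nat \<Rightarrow> real) \<Rightarrow> nat \<Rightarrow> nat" where
  "leader_change K l t = (if t = 1 \<or> (\<exists>k<K. cumloss l (t - 1) k = Lstar K l (t - 1)
                                         \<and> cumloss l t k \<noteq> Lstar K l t) then 1 else 0)"

definition num_changes :: "nat \<Rightarrow> (nat \<Rightarrow> nat \<Rightarrow> real) \<Rightarrow> nat \<Rightarrow> nat" where
  "num_changes K l T = (\<Sum>t=1..T. leader_change K l t)"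

end

theory Submission
  imports Defs
begin

text \<open>FTL's loss in round \<open>t\<close> is the average loss of the leaders after round \<open>t - 1\<close>, and
  the mix loss is the increase of the leader's cumulative loss. If no leader loses the lead, every
  leader suffers exactly that increase, so the mixability gap vanishes; otherwise it is at most
  \<open>h\<^sub>t - m\<^sub>t \<le> 1 - 0\<close>. Summing, the mix losses telescope to \<open>L\<^sup>*\<^sub>T - L\<^sup>*\<^sub>0 = L\<^sup>*\<^sub>T\<close>, which
  identifies the regret with the total mixability gap.\<close>

lemma Lstar_le_cumloss: "k < K \<Longrightarrow> Lstar K l t \<le> cumloss l t k"
  unfolding Lstar_def by (rule Min_le) auto

lemma Lstar_attained:
  assumes "K \<ge> 1"
  obtains k where "k < K" "cumloss l t k = Lstar K l t"
proof -
  have "Lstar K l t \<in> (\<lambda>k. cumloss l t k) ` {..<K}"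
    unfolding Lstar_def using assms by (intro Min_in) (auto simp: lessThan_empty_iff)
  then show ?thesis using that by auto
qed

lemma cumloss_Suc: "cumloss l (Suc t) k = cumloss l t k + l (Suc t) k"
  unfolding cumloss_def by simp

lemma Lstar_0: "K \<ge> 1 \<Longrightarrow> Lstar K l 0 = 0"
proof -
  assume "K \<ge> 1"
  then have "(\<lambda>k. cumloss l 0 k) ` {..<K} = {0}"
    by (auto simp: cumloss_def image_iff intro!: exI[of _ 0])
  then show ?thesis unfolding Lstar_def by simp
qed

lemma
  assumes "K \<ge> 1"
  shows finite_leaders: "finite (leaders K l t)"
    and leaders_nonempty: "leaders K l t \<noteq> {}"
    and leaders_subset: "leaders K l t \<subseteq> {..<K}"
  using Lstar_attained[OF assms, of l t] unfolding leaders_def by auto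

lemma card_leaders_pos: "K \<ge> 1 \<Longrightarrow> 0 < real (card (leaders K l t))"
  using finite_leaders leaders_nonempty by (simp add: card_gt_0_iff)

lemma ftl_loss_eq_leader_average:
  assumes "K \<ge> 1"
  shows "ftl_loss K l t =
    (\<Sum>k\<in>leaders K l (t - 1). l t k / real (card (leaders K l (t - 1))))"
proof -
  let ?A = "leaders K l (t - 1)"
  have "ftl_loss K l t = (\<Sum>k\<in>{..<K} \<inter> ?A. l t k / real (card ?A))"
    unfolding ftl_loss_def ftl_weight_def sum.inter_restrict[OF finite_lessThan]
    by (intro sum.cong) auto
  also have "{..<K} \<inter> ?A = ?A" using leaders_subset[OF assms] by blast
  finally show ?thesis .
qed

lemma ftl_loss_le_1:
  assumes "K \<ge> 1" and "\<And>k. k < K \<Longrightarrow> l t k \<le> 1"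
  shows "ftl_loss K l t \<le> 1"
proof -
  let ?A = "leaders K l (t - 1)"
  have "ftl_loss K l t \<le> (\<Sum>k\<in>?A. 1 / real (card ?A))"
    unfolding ftl_loss_eq_leader_average[OF assms(1)]
    using assms leaders_subset[OF assms(1)] card_leaders_pos[OF assms(1)]
    by (intro sum_mono divide_right_mono) auto
  also have "\<dots> = 1" using card_leaders_pos[OF assms(1)] by simp
  finally show ?thesis .
qed

lemma mix_loss_inf_nonneg:
  assumes "K \<ge> 1" and "t \<ge> 1" and "\<And>k. k < K \<Longrightarrow> 0 \<le> l t k"
  shows "0 \<le> mix_loss_inf K l t"
proof -
  obtain k where k: "k < K" "cumloss l t k = Lstar K l t"
    using Lstar_attained[OF assms(1)] .
  have "cumloss l t k = cumloss l (t - 1) k + l t k"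
    using cumloss_Suc[of l "t - 1" k] \<open>t \<ge> 1\<close> by simp
  then show ?thesis
    unfolding mix_loss_inf_def using k Lstar_le_cumloss[OF k(1), of l "t - 1"] assms(3)[OF k(1)]
    by simp
qed

lemma mixgap_inf_eq_0_if_no_leader_change:
  assumes "K \<ge> 1" and "t \<ge> 1" and "leader_change K l t = 0"
  shows "mixgap_inf K l t = 0"
proof -
  let ?A = "leaders K l (t - 1)"
  have leader_loss: "l t k = mix_loss_inf K l t" if "k \<in> ?A" for k
  proof -
    from that have "k < K" "cumloss l (t - 1) k = Lstar K l (t - 1)"
      unfolding leaders_def by auto
    moreover from calculation have "cumloss l t k = Lstar K l t"
      using assms(3) unfolding leader_change_def by (auto split: if_splits)
    moreover have "cumloss l t k = cumloss l (t - 1) k + l t k"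
      using cumloss_Suc[of l "t - 1" k] \<open>t \<ge> 1\<close> by simp
    ultimately show ?thesis unfolding mix_loss_inf_def by simp
  qed
  have "ftl_loss K l t = (\<Sum>k\<in>?A. mix_loss_inf K l t / real (card ?A))"
    unfolding ftl_loss_eq_leader_average[OF assms(1)] by (simp add: leader_loss)
  also have "\<dots> = mix_loss_inf K l t" using card_leaders_pos[OF assms(1)] by simp
  finally show ?thesis unfolding mixgap_inf_def by simp
qed

lemma mixgap_inf_le_leader_change:
  assumes "K \<ge> 1" and "t \<ge> 1" and "\<And>k. k < K \<Longrightarrow> 0 \<le> l t k \<and> l t k \<le> 1"
  shows "mixgap_inf K l t \<le> real (leader_change K l t)"
proof (cases "leader_change K l t = 0")
  case True
  then show ?thesis using mixgap_inf_eq_0_if_no_leader_change[OF assms(1,2)] by simp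
next
  case False
  then have "leader_change K l t = 1" unfolding leader_change_def by (auto split: if_splits)
  moreover have "ftl_loss K l t \<le> 1" using ftl_loss_le_1[OF assms(1)] assms(3) by blast
  moreover have "0 \<le> mix_loss_inf K l t" using mix_loss_inf_nonneg[OF assms(1,2)] assms(3) by blast
  ultimately show ?thesis unfolding mixgap_inf_def by simp
qed

lemma sum_mix_loss_inf: "(\<Sum>t=1..T. mix_loss_inf K l t) = Lstar K l T - Lstar K l 0"
  by (induction T) (auto simp: mix_loss_inf_def)

lemma ftl_regret_eq_Mixgap_inf: "K \<ge> 1 \<Longrightarrow> ftl_regret K l T = Mixgap_inf K l T"
  unfolding ftl_regret_def Mixgap_inf_def mixgap_inf_def sum_subtractf sum_mix_loss_inf
  by (simp add: Lstar_0)

theorem lemma9: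
  fixes K T :: nat and l :: "nat \<Rightarrow> nat \<Rightarrow> real"
  assumes "K \<ge> 1" and "T \<ge> 1"
    and "\<And>t k. 1 \<le> t \<Longrightarrow> t \<le> T \<Longrightarrow> k < K \<Longrightarrow> 0 \<le> l t k \<and> l t k \<le> 1"
  shows "ftl_regret K l T = Mixgap_inf K l T \<and> Mixgap_inf K l T \<le> real (num_changes K l T)"
proof
  show "ftl_regret K l T = Mixgap_inf K l T"
    using ftl_regret_eq_Mixgap_inf[OF assms(1)] .
  have "Mixgap_inf K l T \<le> (\<Sum>t=1..T. real (leader_change K l t))"
    unfolding Mixgap_inf_def
    using mixgap_inf_le_leader_change[OF assms(1)] assms(3) by (intro sum_mono) auto
  then show "Mixgap_inf K l T \<le> real (num_changes K l T)"
    unfolding num_changes_def by simp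
qed

end
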